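(* Let $\mathbb K$ be a field with $2\in\mathbb K^\times$, $A$ a unital commutative associative $\mathbb K$-algebra, $\mathfrak k$ a $\mathbb K$-Lie algebra, $\mathfrak g=A\otimes\mathfrak k$ and $\mathfrak z$ a vector space. A $\mathfrak z$-valued 2-cocycle $f=f_1\circ p_1+f_2\circ p_2+f_3\circ p_3$ on $\mathfrak g$ is a coboundary if and only if $f_1=0$, $f_3=0$, and there exists a linear map $\ell:A\to\mathrm{Lin}(\mathfrak k,\mathfrak z)$ with $\tilde f_2(a)=d_{\mathfrak k}(\ell(a))$ for all $a\in A$.
   Context: $\mathfrak g$ has bracket $[a\otimes x,a'\otimes x']=aa'\otimes[x,x']$, $ax=a\otimes x$, unit $\mathbf 1$. $v\wedge w=\tfrac12(v\otimes w-w\otimes v)$, $v\vee w=\tfrac12(v\otimes w+w\otimes v)$. $I_A$ is the kernel of multiplication $S^2(A)\to A$. $p_1(ax\wedge by)=a\wedge b\otimes x\vee y$, $p_2(ax\wedge by)=ab\otimes x\wedge y$, $p_3(ax\wedge by)=(a\vee b-ab\vee\mathbf 1)\otimes x\wedge y$ give an isomorphism $\Lambda^2(\mathfrak g)\cong(\Lambda^2(A)\otimes S^2(\mathfrak k))\oplus(A\otimes\Lambda^2(\mathfrak k))\oplus(I_A\otimes\Lambda^2(\mathfrak k))$. A 2-cocycle is a linear map $\Lambda^2(\mathfrak g)\to\mathfrak z$ vanishing on the span of $[u,v]\wedge w+[v,w]\wedge u+[w,u]\wedge v$; it is a coboundary if it equals $u\wedge v\mapsto-\ell'([u,v])$ for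 some linear $\ell':\mathfrak g\to\mathfrak z$. $\tilde f_2(a)(x,y)=f_2(a\otimes x\wedge y)$. For linear $\lambda:\mathfrak k\to\mathfrak z$, $(d_{\mathfrak k}\lambda)(x,y)=-\lambda([x,y])$. *)

theory Defs
  imports Main "HOL.Vector_Spaces"
begin

definition bilin_map ::
  "('k::field \<Rightarrow> 'a::ab_group_add \<Rightarrow> 'a) \<Rightarrow> ('k \<Rightarrow> 'b::ab_group_add \<Rightarrow> 'b)
   \<Rightarrow> ('k \<Rightarrow> 'c::ab_group_add \<Rightarrow> 'c) \<Rightarrow> ('a \<Rightarrow> 'b \<Rightarrow> 'c) \<Rightarrow> bool" where
  "bilin_map s1 s2 s f \<longleftrightarrow>
     (\<forall>y. Vector_Spaces.linear s1 s (\<lambda>x. f x y)) \<and>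
     (\<forall>x. Vector_Spaces.linear s2 s (\<lambda>y. f x y))"

definition trilin_map ::
  "('k::field \<Rightarrow> 'a::ab_group_add \<Rightarrow> 'a) \<Rightarrow> ('k \<Rightarrow> 'b::ab_group_add \<Rightarrow> 'b)
   \<Rightarrow> ('k \<Rightarrow> 'c::ab_group_add \<Rightarrow> 'c) \<Rightarrow> ('k \<Rightarrow> 'd::ab_group_add \<Rightarrow> 'd)
   \<Rightarrow> ('a \<Rightarrow> 'b \<Rightarrow> 'c \<Rightarrow> 'd) \<Rightarrow> bool" where
  "trilin_map s1 s2 s3 s f \<longleftrightarrow>
     (\<forall>y z. Vector_Spaces.linear s1 s (\<lambda>x. f x y z)) \<and>
     (\<forall>x z. Vector_Spaces.linear s2 s (\<lambda>y. f x y z)) \<and>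
     (\<forall>x y. Vector_Spaces.linear s3 s (\<lambda>z. f x y z))"

definition quadrilin_map ::
  "('k::field \<Rightarrow> 'a::ab_group_add \<Rightarrow> 'a) \<Rightarrow> ('k \<Rightarrow> 'b::ab_group_add \<Rightarrow> 'b)
   \<Rightarrow> ('k \<Rightarrow> 'c::ab_group_add \<Rightarrow> 'c) \<Rightarrow> ('k \<Rightarrow> 'd::ab_group_add \<Rightarrow> 'd)
   \<Rightarrow> ('k \<Rightarrow> 'e::ab_group_add \<Rightarrow> 'e)
   \<Rightarrow> ('a \<Rightarrow> 'b \<Rightarrow> 'c \<Rightarrow> 'd \<Rightarrow> 'e) \<Rightarrow> bool" where
  "quadrilin_map s1 s2 s3 s4 s f \<longleftrightarrow>
     (\<forall>y z w. Vector_Spaces.linear s1 s (\<lambda>x. f x y z w)) \<and>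
     (\<forall>x z w. Vector_Spaces.linear s2 s (\<lambda>y. f x y z w)) \<and>
     (\<forall>x y w. Vector_Spaces.linear s3 s (\<lambda>z. f x y z w)) \<and>
     (\<forall>x y z. Vector_Spaces.linear s4 s (\<lambda>w. f x y z w))"

text \<open>A unital commutative associative K-algebra: the ring structure comes from the
type class (1 is not required to differ from 0), the K-vector space structure
from sA, and scalars commute with multiplication.\<close>

definition comm_unital_algebra ::
  "('k::field \<Rightarrow> 'a::{comm_ring,comm_monoid_mult} \<Rightarrow> 'a) \<Rightarrow> bool" where
  "comm_unital_algebra sA \<longleftrightarrow>
     vector_space sA \<and> (\<forall>c a b. sA c (a * b) = sA c a * b)"

definition lie_algebra ::
  "('k::field \<Rightarrow> 'l::ab_group_add \<Rightarrow> 'l) \<Rightarrow> ('l \<Rightarrow> 'l \<Rightarrow> 'l) \<Rightarrow> bool" where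
  "lie_algebra sL br \<longleftrightarrow>
     vector_space sL \<and> bilin_map sL sL sL br \<and> (\<forall>x. br x x = 0) \<and>
     (\<forall>x y z. br x (br y z) + br y (br z x) + br z (br x y) = 0)"

text \<open>Encoding of g = A \<otimes> k via the universal property of the tensor product:
a linear map \<Lambda>^2(g) \<rightarrow> z, u\<wedge>v \<mapsto> f(u\<wedge>v), is encoded by the 4-linear map
F a x b y = f(ax \<wedge> by) on A \<times> k \<times> A \<times> k, which is antisymmetric under
(a,x) \<leftrightarrow> (b,y).  A linear map g \<rightarrow> z is encoded by a bilinear map L a x = l'(ax).\<close>

definition g_2form where
  "g_2form sA sL sZ F \<longleftrightarrow>
     quadrilin_map sA sL sA sL sZ F \<and> (\<forall>a x b y. F a x b y = - F b y a x)"

text \<open>2-cocycle: vanishing on [u,v]\<wedge>w + [v,w]\<wedge>u + [w,u]\<wedge>v; by multilinearity it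
suffices (and is necessary) to test pure tensors u = ax, v = by, w = cz, using
[ax,by] = ab \<otimes> [x,y].\<close>

definition g_2cocycle where
  "g_2cocycle sA sL sZ br F \<longleftrightarrow>
     g_2form sA sL sZ F \<and>
     (\<forall>a b c x y z. F (a * b) (br x y) c z + F (b * c) (br y z) a x
                      + F (c * a) (br z x) b y = 0)"

definition g_2coboundary where
  "g_2coboundary sA sL sZ br F \<longleftrightarrow>
     (\<exists>L. bilin_map sA sL sZ L \<and> (\<forall>a x b y. F a x b y = - L (a * b) (br x y)))"

end

theory Submission
  imports Defs
begin

text \<open>A coboundary f(ax \<wedge> by) = -\<ell>'(ab \<otimes> [x,y]) is antisymmetric in x, y and depends on
a, b only through ab.  Symmetrising in x, y kills the f2- and f3-parts of f and leaves 2 f1,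
so f1 = 0; putting b = 1 identifies f2 with -\<ell>' \<circ> [-,-]; what remains says
f3(a \<or> b) = f3(ab \<or> 1), i.e. f3 vanishes on I_A.  Conversely, under these conditions
f(ax \<wedge> by) = f2(ab \<otimes> x \<wedge> y) = -\<ell>(ab)([x,y]).\<close>

lemma sum_list_map_additive:
  fixes \<phi> :: "'a::monoid_add \<Rightarrow> 'b::ab_group_add"
  assumes add: "\<And>u v. \<phi> (u + v) = \<phi> u + \<phi> v"
  shows "\<phi> (sum_list xs) = (\<Sum>x\<leftarrow>xs. \<phi> x)"
proof (induction xs)
  case Nil
  have "\<phi> 0 = \<phi> 0 + \<phi> 0"
    using add[of 0 0] by simp
  then show ?case by simp
next
  case (Cons x xs)
  then show ?case by (simp add: add)
qed

lemma vanishes_on_mult_kernel_iff: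
  fixes h :: "'a::{comm_ring,comm_monoid_mult} \<Rightarrow> 'a \<Rightarrow> 'z::ab_group_add"
  assumes add: "\<And>u v. h (u + v) 1 = h u 1 + h v 1"
  shows "(\<forall>ps. (\<Sum>(a, b)\<leftarrow>ps. a * b) = 0 \<longrightarrow> (\<Sum>(a, b)\<leftarrow>ps. h a b) = 0) \<longleftrightarrow>
         (\<forall>a b. h a b = h (a * b) 1)"
proof -
  have zero: "h 0 1 = 0"
    using add[of 0 0] by simp
  have neg: "h (- u) 1 = - h u 1" for u
    using add[of "- u" u] zero by (simp add: eq_neg_iff_add_eq_0)
  show ?thesis
  proof
    assume vanish: "\<forall>ps. (\<Sum>(a, b)\<leftarrow>ps. a * b) = 0 \<longrightarrow> (\<Sum>(a, b)\<leftarrow>ps. h a b) = 0"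
    have "h a b - h (a * b) 1 = 0" for a b
      using vanish[rule_format, of "[(a, b), (- (a * b), 1)]"] neg by simp
    then show "\<forall>a b. h a b = h (a * b) 1"
      by simp
  next
    assume factor: "\<forall>a b. h a b = h (a * b) 1"
    show "\<forall>ps. (\<Sum>(a, b)\<leftarrow>ps. a * b) = 0 \<longrightarrow> (\<Sum>(a, b)\<leftarrow>ps. h a b) = 0"
    proof (intro allI impI)
      fix ps :: "('a \<times> 'a) list"
      assume kernel: "(\<Sum>(a, b)\<leftarrow>ps. a * b) = 0"
      have "(\<Sum>(a, b)\<leftarrow>ps. h a b) = (\<Sum>(a, b)\<leftarrow>ps. h (a * b) 1)"
        using factor by metis
      also have "\<dots> = h (\<Sum>(a, b)\<leftarrow>ps. a * b) 1"
        using sum_list_map_additive[of "\<lambda>u. h u 1" "map (\<lambda>(a, b). a * b) ps"] add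
        by (simp add: o_def split_def)
      finally show "(\<Sum>(a, b)\<leftarrow>ps. h a b) = 0"
        using kernel zero by simp
    qed
  qed
qed

lemma (in vector_space) double_eq_0_iff:
  fixes x :: 'b
  assumes "(2::'a) \<noteq> 0"
  shows "x + x = 0 \<longleftrightarrow> x = 0"
proof -
  have "x + x = scale 2 x"
    by (simp add: scale_left_distrib[of 1 1, simplified one_add_one])
  then show ?thesis
    using assms by simp
qed

lemma lie_bracket_swap:
  assumes "lie_algebra sL br"
  shows "br y x = - br x y"
proof -
  have add_left: "br (u + v) w = br u w + br v w"
    and add_right: "br w (u + v) = br w u + br w v" for u v w
    using assms unfolding lie_algebra_def bilin_map_def linear_iff by blast+
  have alt: "br u u = 0" for u
    using assms unfolding lie_algebra_def by blast
  have "0 = br (x + y) (x + y)"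
    by (simp only: alt)
  also have "\<dots> = br x x + br y x + (br x y + br y y)"
    by (simp only: add_left add_right)
  also have "\<dots> = br x y + br y x"
    by (simp add: alt)
  finally show ?thesis
    by (simp add: eq_neg_iff_add_eq_0 add.commute)
qed

lemma g_2coboundary_swap_lie:
  assumes "lie_algebra sL br" and "g_2coboundary sA sL sZ br F"
  shows "F a y b x = - F a x b y"
proof -
  obtain L where "bilin_map sA sL sZ L" and F: "\<forall>a x b y. F a x b y = - L (a * b) (br x y)"
    using assms(2) unfolding g_2coboundary_def by blast
  then have "Vector_Spaces.linear sL sZ (L (a * b))"
    unfolding bilin_map_def by simp
  then have "L (a * b) (- br x y) = - L (a * b) (br x y)"
    unfolding module_hom_iff_linear[symmetric] by (rule module_hom.neg)
  then show ?thesis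
    using F lie_bracket_swap[OF assms(1), of x y] by simp
qed

theorem proposition3p6:
  fixes sA :: "'k::field \<Rightarrow> 'a::{comm_ring,comm_monoid_mult} \<Rightarrow> 'a"
    and sL :: "'k \<Rightarrow> 'l::ab_group_add \<Rightarrow> 'l"
    and br :: "'l \<Rightarrow> 'l \<Rightarrow> 'l"
    and sZ :: "'k \<Rightarrow> 'z::ab_group_add \<Rightarrow> 'z"
    and F :: "'a \<Rightarrow> 'l \<Rightarrow> 'a \<Rightarrow> 'l \<Rightarrow> 'z"
    and F1 :: "'a \<Rightarrow> 'a \<Rightarrow> 'l \<Rightarrow> 'l \<Rightarrow> 'z"
    and F2 :: "'a \<Rightarrow> 'l \<Rightarrow> 'l \<Rightarrow> 'z"
    and F3 :: "'a \<Rightarrow> 'a \<Rightarrow> 'l \<Rightarrow> 'l \<Rightarrow> 'z"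
  assumes two: "(2::'k) \<noteq> 0"
    and A: "comm_unital_algebra sA"
    and k: "lie_algebra sL br"
    and z: "vector_space sZ"
    and cocycle: "g_2cocycle sA sL sZ br F"
    \<comment> \<open>f1 : \<Lambda>^2(A) \<otimes> S^2(k) \<rightarrow> z, encoded by f1(a\<wedge>b \<otimes> x\<or>y) = F1 a b x y\<close>
    and f1: "quadrilin_map sA sA sL sL sZ F1"
      "\<forall>a b x y. F1 b a x y = - F1 a b x y"
      "\<forall>a b x y. F1 a b y x = F1 a b x y"
    \<comment> \<open>f2 : A \<otimes> \<Lambda>^2(k) \<rightarrow> z, encoded by f2(a \<otimes> x\<wedge>y) = F2 a x y\<close>
    and f2: "trilin_map sA sL sL sZ F2"
      "\<forall>a x y. F2 a y x = - F2 a x y"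
    \<comment> \<open>f3 : I_A \<otimes> \<Lambda>^2(k) \<rightarrow> z, given as the restriction of a linear map on
        S^2(A) \<otimes> \<Lambda>^2(k) encoded by (a\<or>b \<otimes> x\<wedge>y) \<mapsto> F3 a b x y\<close>
    and f3: "quadrilin_map sA sA sL sL sZ F3"
      "\<forall>a b x y. F3 b a x y = F3 a b x y"
      "\<forall>a b x y. F3 a b y x = - F3 a b x y"
    \<comment> \<open>f = f1 \<circ> p1 + f2 \<circ> p2 + f3 \<circ> p3, evaluated on ax \<wedge> by\<close>
    and decomp: "\<forall>a x b y. F a x b y =
                   F1 a b x y + F2 (a * b) x y + (F3 a b x y - F3 (a * b) 1 x y)"
  shows "g_2coboundary sA sL sZ br F \<longleftrightarrow>
           (\<forall>a b x y. F1 a b x y = 0) \<and>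
           (\<forall>(ps :: ('a \<times> 'a) list) x y.
              (\<Sum>(a, b)\<leftarrow>ps. a * b) = 0 \<longrightarrow> (\<Sum>(a, b)\<leftarrow>ps. F3 a b x y) = 0) \<and>
           (\<exists>l :: 'a \<Rightarrow> 'l \<Rightarrow> 'z. bilin_map sA sL sZ l \<and>
              (\<forall>a x y. F2 a x y = - l a (br x y)))"
proof -
  have F_swap_sum: "F a x b y + F a y b x = F1 a b x y + F1 a b x y" for a b x y
    by (simp only: decomp[rule_format, of a x b y] decomp[rule_format, of a y b x]
        f1(3)[rule_format, of a b y x] f2(2)[rule_format, of "a * b" y x]
        f3(3)[rule_format, of a b y x] f3(3)[rule_format, of "a * b" 1 y x])
      (simp add: algebra_simps)
  have F3_kernel_iff:
    "(\<forall>ps. (\<Sum>(a, b)\<leftarrow>ps. a * b) = 0 \<longrightarrow> (\<Sum>(a, b)\<leftarrow>ps. F3 a b x y) = 0) \<longleftrightarrow>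
     (\<forall>a b. F3 a b x y = F3 (a * b) 1 x y)" for x y
    using f3(1) by (intro vanishes_on_mult_kernel_iff) (simp add: quadrilin_map_def linear_iff)
  show ?thesis
  proof (intro iffI conjI allI impI)
    assume cb: "g_2coboundary sA sL sZ br F"
    then obtain L where L: "bilin_map sA sL sZ L" "\<And>a x b y. F a x b y = - L (a * b) (br x y)"
      unfolding g_2coboundary_def by blast
    show F1_0: "F1 a b x y = 0" for a b x y
      using F_swap_sum[of a x b y] g_2coboundary_swap_lie[OF k cb, of a x b y]
        vector_space.double_eq_0_iff[OF z two] by simp
    have F2_L: "F2 a x y = - L a (br x y)" for a x y
      using decomp[rule_format, of a x 1 y] L(2)[of a x 1 y] F1_0 by simp
    then show "\<exists>l. bilin_map sA sL sZ l \<and> (\<forall>a x y. F2 a x y = - l a (br x y))"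
      using L(1) by blast
    have "F3 a b x y = F3 (a * b) 1 x y" for a b x y
      using decomp[rule_format, of a x b y] L(2)[of a x b y] F1_0 F2_L[of "a * b"] by simp
    then show "(\<Sum>(a, b)\<leftarrow>ps. a * b) = 0 \<Longrightarrow> (\<Sum>(a, b)\<leftarrow>ps. F3 a b x y) = 0" for ps x y
      using F3_kernel_iff by blast
  next
    assume conds: "(\<forall>a b x y. F1 a b x y = 0) \<and>
           (\<forall>(ps :: ('a \<times> 'a) list) x y.
              (\<Sum>(a, b)\<leftarrow>ps. a * b) = 0 \<longrightarrow> (\<Sum>(a, b)\<leftarrow>ps. F3 a b x y) = 0) \<and>
           (\<exists>l. bilin_map sA sL sZ l \<and> (\<forall>a x y. F2 a x y = - l a (br x y)))"
    then obtain l where l: "bilin_map sA sL sZ l" "\<And>a x y. F2 a x y = - l a (br x y)"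
      by blast
    have F3_factor: "F3 a b x y = F3 (a * b) 1 x y" for a b x y
      using conds F3_kernel_iff by blast
    have "F a x b y = - l (a * b) (br x y)" for a x b y
      using decomp[rule_format, of a x b y] conds F3_factor[of a b x y] l(2)[of "a * b"] by simp
    then show "g_2coboundary sA sL sZ br F"
      unfolding g_2coboundary_def using l(1) by blast
  qed
qed

end
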